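(* For any graph function $\alpha$ on a strongly connected digraph $G$, we have $\rho^R/2\le h$, where $\rho^R=\max_v\rho^R_v$ and $h=\max_v y_v-\min_v y_v$.
   Context: $G$ is a strongly connected directed graph on vertex set $\{1,\dots,n\}$ (self-loops allowed); a graph function assigns a real weight $\alpha_{uv}$ to each edge. $\alpha_v^{\text{in}}=\max_{u:(u,v)\in G}\alpha_{uv}$, $\alpha_v^{\text{out}}=\max_{w:(v,w)\in G}\alpha_{vw}$, $\rho^R_v=\max\{0,\alpha_v^{\text{out}}-\alpha_v^{\text{in}}\}$. A raising operation at $v$: if $\rho^R_v>0$ add $\rho^R_v/2$ to each incoming edge weight $\alpha_{uv}$ ($u\ne v$) and subtract it from each outgoing $\alpha_{vw}$ ($w\neq v$); otherwise do nothing. Starting from $\alpha$, for any infinite sequence of raising operations in which every vertex occurs infinitely often, the cumulative amount $r_v(t)$ by which each vertex has been raised (sum of the increments $\rho^R_v/2$ over operations at $v$) converges to a limit vector $r^*$ that does not depend on the sequence. The heights are $y_v=-r^*_v$. *)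

theory Defs
  imports Complex_Main
begin

text \<open>Vertex set {1..n}; edges E (self-loops allowed); a graph function is
  alpha :: nat => nat => real, only its values on edges of E matter.\<close>

definition strongly_connected :: "nat \<Rightarrow> (nat \<times> nat) set \<Rightarrow> bool" where
  "strongly_connected n E \<longleftrightarrow> E \<subseteq> {1..n} \<times> {1..n} \<and>
     (\<forall>u\<in>{1..n}. \<forall>v\<in>{1..n}. (u, v) \<in> E\<^sup>+)"

definition alpha_in :: "(nat \<times> nat) set \<Rightarrow> (nat \<Rightarrow> nat \<Rightarrow> real) \<Rightarrow> nat \<Rightarrow> real" where
  "alpha_in E \<alpha> v = Max {\<alpha> u v | u. (u, v) \<in> E}"

definition alpha_out :: "(nat \<times> nat) set \<Rightarrow> (nat \<Rightarrow> nat \<Rightarrow> real) \<Rightarrow> nat \<Rightarrow> real" where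
  "alpha_out E \<alpha> v = Max {\<alpha> v w | w. (v, w) \<in> E}"

definition rhoR :: "(nat \<times> nat) set \<Rightarrow> (nat \<Rightarrow> nat \<Rightarrow> real) \<Rightarrow> nat \<Rightarrow> real" where
  "rhoR E \<alpha> v = max 0 (alpha_out E \<alpha> v - alpha_in E \<alpha> v)"

definition raise_op :: "(nat \<times> nat) set \<Rightarrow> (nat \<Rightarrow> nat \<Rightarrow> real) \<Rightarrow> nat \<Rightarrow> (nat \<Rightarrow> nat \<Rightarrow> real)" where
  "raise_op E \<alpha> v = (if rhoR E \<alpha> v > 0 then
     (\<lambda>a b. \<alpha> a b + (if b = v \<and> a \<noteq> v then rhoR E \<alpha> v / 2 else 0)
                   - (if a = v \<and> b \<noteq> v then rhoR E \<alpha> v / 2 else 0))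
     else \<alpha>)"

primrec alpha_seq :: "(nat \<times> nat) set \<Rightarrow> (nat \<Rightarrow> nat \<Rightarrow> real) \<Rightarrow> (nat \<Rightarrow> nat) \<Rightarrow> nat \<Rightarrow> (nat \<Rightarrow> nat \<Rightarrow> real)" where
  "alpha_seq E \<alpha> \<sigma> 0 = \<alpha>"
| "alpha_seq E \<alpha> \<sigma> (Suc t) = raise_op E (alpha_seq E \<alpha> \<sigma> t) (\<sigma> t)"

definition raised :: "(nat \<times> nat) set \<Rightarrow> (nat \<Rightarrow> nat \<Rightarrow> real) \<Rightarrow> (nat \<Rightarrow> nat) \<Rightarrow> nat \<Rightarrow> nat \<Rightarrow> real" where
  "raised E \<alpha> \<sigma> v t = (\<Sum>s<t. if \<sigma> s = v then rhoR E (alpha_seq E \<alpha> \<sigma> s) v / 2 else 0)"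

end

theory Submission
  imports Defs
begin

text \<open>Along the raising sequence every edge weight changes by a potential difference:
  \<open>\<alpha>\<^sub>t(a,b) = \<alpha>(a,b) + r\<^sub>b(t) - r\<^sub>a(t)\<close> off the diagonal. Hence the weights converge to
  \<open>\<alpha>\<^sup>*(a,b) = \<alpha>(a,b) + r\<^sup>*\<^sub>b - r\<^sup>*\<^sub>a\<close>, and since the raising amounts \<open>\<rho>\<^sup>R\<^sub>v(\<alpha>\<^sub>t)/2\<close> at the
  infinitely many visits of \<open>v\<close> tend to zero while \<open>\<rho>\<^sup>R\<^sub>v\<close> depends continuously on the weights,
  \<open>\<rho>\<^sup>R\<^sub>v(\<alpha>\<^sup>*) = 0\<close>. Passing from \<open>\<alpha>\<^sup>*\<close> back to \<open>\<alpha>\<close> moves each incoming and each outgoing weight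
  at \<open>v\<close> by at most the spread \<open>h\<close> of the potential, so \<open>\<rho>\<^sup>R\<^sub>v(\<alpha>) \<le> \<rho>\<^sup>R\<^sub>v(\<alpha>\<^sup>*) + 2h = 2h\<close>.\<close>

lemma alpha_in_eq_Max_image: "alpha_in E \<alpha> v = Max ((\<lambda>u. \<alpha> u v) ` {u. (u, v) \<in> E})"
  unfolding alpha_in_def by (rule arg_cong[where f = Max]) blast

lemma alpha_out_eq_Max_image: "alpha_out E \<alpha> v = Max ((\<lambda>w. \<alpha> v w) ` {w. (v, w) \<in> E})"
  unfolding alpha_out_def by (rule arg_cong[where f = Max]) blast

lemma rhoR_nonneg: "0 \<le> rhoR E \<alpha> v"
  by (simp add: rhoR_def)

lemma finite_in_neighbours: "finite E \<Longrightarrow> finite {u. (u, v) \<in> E}"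
  by (rule finite_subset[of _ "fst ` E"]) force+

lemma finite_out_neighbours: "finite E \<Longrightarrow> finite {w. (v, w) \<in> E}"
  by (rule finite_subset[of _ "snd ` E"]) force+

lemma Max_image_le_Max_image_add:
  fixes f g :: "'a \<Rightarrow> real"
  assumes "finite A" and "A \<noteq> {}" and "\<And>x. x \<in> A \<Longrightarrow> f x \<le> g x + d"
  shows "Max (f ` A) \<le> Max (g ` A) + d"
proof -
  have "f x \<le> Max (g ` A) + d" if "x \<in> A" for x
  proof -
    have "g x \<le> Max (g ` A)" using assms(1) that by (intro Max_ge) auto
    then show ?thesis using assms(3)[OF that] by linarith
  qed
  then show ?thesis using assms(1,2) by simp
qed

lemma diff_le_Max_minus_Min:
  fixes f :: "'a \<Rightarrow> real"
  assumes "finite S" and "a \<in> S" and "b \<in> S"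
  shows "f a - f b \<le> Max (f ` S) - Min (f ` S)"
proof -
  have "f a \<le> Max (f ` S)" "Min (f ` S) \<le> f b"
    using assms by (auto intro: Max_ge Min_le)
  then show ?thesis by linarith
qed

lemma tendsto_Max_image:
  fixes f :: "'b \<Rightarrow> 'a \<Rightarrow> 'c::linorder_topology"
  assumes "finite A" and "\<And>x. x \<in> A \<Longrightarrow> ((\<lambda>t. f t x) \<longlongrightarrow> g x) F"
  shows "((\<lambda>t. Max (f t ` A)) \<longlongrightarrow> Max (g ` A)) F"
  using assms
proof (induction A rule: finite_induct)
  case empty
  show ?case by simp
next
  case (insert x A)
  then show ?case
    by (cases "A = {}") (simp_all add: tendsto_max)
qed

lemma rhoR_tendsto:
  assumes "finite E" and "\<And>a b. (a, b) \<in> E \<Longrightarrow> ((\<lambda>t. f t a b) \<longlongrightarrow> \<beta> a b) F"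
  shows "((\<lambda>t. rhoR E (f t) v) \<longlongrightarrow> rhoR E \<beta> v) F"
proof -
  have "((\<lambda>t. alpha_in E (f t) v) \<longlongrightarrow> alpha_in E \<beta> v) F"
    unfolding alpha_in_eq_Max_image
    using assms by (intro tendsto_Max_image finite_in_neighbours) auto
  moreover have "((\<lambda>t. alpha_out E (f t) v) \<longlongrightarrow> alpha_out E \<beta> v) F"
    unfolding alpha_out_eq_Max_image
    using assms by (intro tendsto_Max_image finite_out_neighbours) auto
  ultimately show ?thesis
    unfolding rhoR_def by (intro tendsto_intros)
qed

lemma rhoR_le_rhoR_add:
  assumes "finite E" and "(u\<^sub>0, v) \<in> E" and "(v, w\<^sub>0) \<in> E" and "0 \<le> d"
    and "\<And>u. (u, v) \<in> E \<Longrightarrow> \<beta> u v \<le> \<alpha> u v + d"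
    and "\<And>w. (v, w) \<in> E \<Longrightarrow> \<alpha> v w \<le> \<beta> v w + d"
  shows "rhoR E \<alpha> v \<le> rhoR E \<beta> v + 2 * d"
proof -
  have "alpha_in E \<beta> v \<le> alpha_in E \<alpha> v + d"
    unfolding alpha_in_eq_Max_image
    using assms by (intro Max_image_le_Max_image_add finite_in_neighbours) auto
  moreover have "alpha_out E \<alpha> v \<le> alpha_out E \<beta> v + d"
    unfolding alpha_out_eq_Max_image
    using assms by (intro Max_image_le_Max_image_add finite_out_neighbours) auto
  ultimately show ?thesis
    using assms(4) unfolding rhoR_def by linarith
qed

lemma raised_Suc:
  "raised E \<alpha> \<sigma> v (Suc t) =
     raised E \<alpha> \<sigma> v t + (if \<sigma> t = v then rhoR E (alpha_seq E \<alpha> \<sigma> t) v / 2 else 0)"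
  by (simp add: raised_def)

lemma alpha_seq_eq_raised:
  "alpha_seq E \<alpha> \<sigma> t a b = \<alpha> a b + (if a \<noteq> b then raised E \<alpha> \<sigma> b t - raised E \<alpha> \<sigma> a t else 0)"
proof (induction t)
  case 0
  show ?case by (simp add: raised_def)
next
  case (Suc t)
  have "rhoR E (alpha_seq E \<alpha> \<sigma> t) (\<sigma> t) = 0" if "\<not> rhoR E (alpha_seq E \<alpha> \<sigma> t) (\<sigma> t) > 0"
    using that rhoR_nonneg[of E "alpha_seq E \<alpha> \<sigma> t" "\<sigma> t"] by linarith
  then show ?case
    using Suc by (auto simp: raised_Suc raise_op_def)
qed

lemma alpha_seq_tendsto:
  assumes "raised E \<alpha> \<sigma> a \<longlonglongrightarrow> r a" and "raised E \<alpha> \<sigma> b \<longlonglongrightarrow> r b"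
  shows "(\<lambda>t. alpha_seq E \<alpha> \<sigma> t a b) \<longlonglongrightarrow> \<alpha> a b + (if a \<noteq> b then r b - r a else 0)"
  unfolding alpha_seq_eq_raised using assms by (auto intro!: tendsto_intros)

lemma rhoR_limit_eq_0:
  assumes "raised E \<alpha> \<sigma> v \<longlonglongrightarrow> r"
    and "frequently (\<lambda>t. \<sigma> t = v) sequentially"
    and "(\<lambda>t. rhoR E (alpha_seq E \<alpha> \<sigma> t) v) \<longlonglongrightarrow> \<rho>"
  shows "\<rho> = 0"
proof (rule ccontr)
  assume "\<rho> \<noteq> 0"
  moreover have "0 \<le> \<rho>"
    by (intro LIMSEQ_le_const[OF assms(3)]) (auto intro: rhoR_nonneg)
  ultimately have "0 < \<rho>" by simp
  have "(\<lambda>t. raised E \<alpha> \<sigma> v (Suc t) - raised E \<alpha> \<sigma> v t) \<longlonglongrightarrow> r - r"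
    using assms(1) by (intro tendsto_diff LIMSEQ_Suc)
  then have "eventually (\<lambda>t. raised E \<alpha> \<sigma> v (Suc t) - raised E \<alpha> \<sigma> v t < \<rho> / 4) sequentially"
    using \<open>0 < \<rho>\<close> by (intro order_tendstoD) auto
  moreover have "eventually (\<lambda>t. \<rho> / 2 < rhoR E (alpha_seq E \<alpha> \<sigma> t) v) sequentially"
    using assms(3) \<open>0 < \<rho>\<close> by (intro order_tendstoD) auto
  ultimately have "frequently (\<lambda>t. \<sigma> t = v \<and>
      raised E \<alpha> \<sigma> v (Suc t) - raised E \<alpha> \<sigma> v t < \<rho> / 4 \<and>
      \<rho> / 2 < rhoR E (alpha_seq E \<alpha> \<sigma> t) v) sequentially"
    using assms(2) by (intro frequently_eventually_frequently eventually_conj)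
  then obtain t where "\<sigma> t = v" "raised E \<alpha> \<sigma> v (Suc t) - raised E \<alpha> \<sigma> v t < \<rho> / 4"
    "\<rho> / 2 < rhoR E (alpha_seq E \<alpha> \<sigma> t) v"
    using frequently_ex by blast
  then show False by (simp add: raised_Suc)
qed

lemma strongly_connected_finite: "strongly_connected n E \<Longrightarrow> finite E"
  unfolding strongly_connected_def by (auto intro: finite_subset)

lemma strongly_connected_edges:
  assumes "strongly_connected n E" and "v \<in> {1..n}"
  obtains u w where "(u, v) \<in> E" and "(v, w) \<in> E"
proof -
  have "(v, v) \<in> E\<^sup>+" using assms unfolding strongly_connected_def by blast
  then show ?thesis using that by (meson tranclD tranclD2)
qed

theorem proposition2:
  fixes n :: nat and E :: "(nat \<times> nat) set" and \<alpha> :: "nat \<Rightarrow> nat \<Rightarrow> real"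
    and \<sigma> :: "nat \<Rightarrow> nat" and rstar :: "nat \<Rightarrow> real"
  assumes "n \<ge> 1"
    and "strongly_connected n E"
    and "\<forall>t. \<sigma> t \<in> {1..n}"
    and "\<forall>v\<in>{1..n}. frequently (\<lambda>t. \<sigma> t = v) sequentially"
    and "\<forall>v\<in>{1..n}. (\<lambda>t. raised E \<alpha> \<sigma> v t) \<longlonglongrightarrow> rstar v"
  shows "Max ((\<lambda>v. rhoR E \<alpha> v) ` {1..n}) / 2
           \<le> Max ((\<lambda>v. - rstar v) ` {1..n}) - Min ((\<lambda>v. - rstar v) ` {1..n})"
proof -
  define S where "S = {1..n}"
  define h where "h = Max ((\<lambda>v. - rstar v) ` S) - Min ((\<lambda>v. - rstar v) ` S)"
  define \<beta> where "\<beta> a b = \<alpha> a b + (if a \<noteq> b then rstar b - rstar a else 0)" for a b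
  have ES: "E \<subseteq> S \<times> S" and "finite E"
    using assms(2) strongly_connected_finite by (auto simp: strongly_connected_def S_def)
  have spread: "rstar a - rstar b \<le> h" if "a \<in> S" "b \<in> S" for a b
    using diff_le_Max_minus_Min[of S b a "\<lambda>v. - rstar v"] that by (simp add: h_def S_def)
  have "Max ((\<lambda>v. rhoR E \<alpha> v) ` S) \<in> (\<lambda>v. rhoR E \<alpha> v) ` S"
    using assms(1) by (intro Max_in) (auto simp: S_def)
  then obtain v where "v \<in> S" and v_max: "rhoR E \<alpha> v = Max ((\<lambda>v. rhoR E \<alpha> v) ` S)"
    by auto
  obtain u\<^sub>0 w\<^sub>0 where "(u\<^sub>0, v) \<in> E" "(v, w\<^sub>0) \<in> E"
    using strongly_connected_edges assms(2) \<open>v \<in> S\<close> S_def by blast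
  have "0 \<le> h" using spread[OF \<open>v \<in> S\<close> \<open>v \<in> S\<close>] by simp
  have in_shift: "\<beta> u v \<le> \<alpha> u v + h" if "(u, v) \<in> E" for u
    using spread[of v u] ES \<open>v \<in> S\<close> that \<open>0 \<le> h\<close> by (auto simp: \<beta>_def)
  have out_shift: "\<alpha> v w \<le> \<beta> v w + h" if "(v, w) \<in> E" for w
    using spread[of v w] ES \<open>v \<in> S\<close> that \<open>0 \<le> h\<close> by (auto simp: \<beta>_def)
  have "(\<lambda>t. alpha_seq E \<alpha> \<sigma> t a b) \<longlonglongrightarrow> \<beta> a b" if "(a, b) \<in> E" for a b
    unfolding \<beta>_def using that ES assms(5) by (intro alpha_seq_tendsto) (auto simp: S_def)
  then have "(\<lambda>t. rhoR E (alpha_seq E \<alpha> \<sigma> t) v) \<longlonglongrightarrow> rhoR E \<beta> v"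
    using \<open>finite E\<close> by (rule rhoR_tendsto[rotated])
  then have "rhoR E \<beta> v = 0"
    using assms(4,5) \<open>v \<in> S\<close> by (intro rhoR_limit_eq_0) (auto simp: S_def)
  moreover have "rhoR E \<alpha> v \<le> rhoR E \<beta> v + 2 * h"
    using \<open>finite E\<close> \<open>(u\<^sub>0, v) \<in> E\<close> \<open>(v, w\<^sub>0) \<in> E\<close> \<open>0 \<le> h\<close> in_shift out_shift
    by (rule rhoR_le_rhoR_add)
  ultimately show ?thesis
    using v_max by (simp add: h_def S_def)
qed

end
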